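(* Let $q=p^h$ with $p>3$ prime, $q\ge 7$, and let $X,T$ be positive integers with $X+T\ge 3(q+2)$. Let $\mathcal{E}$ be an $\mathbb{F}_{q^2}$-maximal elliptic curve over $\mathbb{F}_{q^2}$ with affine equation $y^2=f(x)$, $\deg f=3$, and $\gamma=\#\{z\in\mathbb{F}_{q^2}: f(z)=0\}$. Define $$\mathcal{R}^{\mathcal{E}}_{\max}=\frac{L^{\mathcal{E}}}{L^{\mathcal{E}}+X+T+8},\qquad L^{\mathcal{E}}=2\left\lfloor\frac{\#\mathcal{E}(\mathbb{F}_{q^2})-(X+T+\gamma+9)}{4}\right\rfloor-1,$$ $$\mathcal{R}^{\mathcal{H}_q}_{\max}=\frac{L^{\mathcal{H}}}{L^{\mathcal{H}}+X+T+3q^2-q-2},\qquad L^{\mathcal{H}}=mq-\frac{q(q-1)}{2},\quad m=\left\lfloor\frac{q^3-3q^2+q+1-(X+T)}{2q}\right\rfloor.$$ Then $\mathcal{R}^{\mathcal{H}_q}_{\max}>\mathcal{R}^{\mathcal{E}}_{\max}$.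
   Context: An elliptic curve over $\mathbb{F}_{q^2}$ is $\mathbb{F}_{q^2}$-maximal if it has $q^2+1+2q$ rational points. $\mathcal{R}^{\mathcal{E}}_{\max}$ is the maximal rate of the known $X$-secure $T$-private PIR construction from the elliptic curve $\mathcal{E}$ (rate $L/(L+X+T+8)$), and $\mathcal{R}^{\mathcal{H}_q}_{\max}$ is the maximal rate of the PIR construction from the Hermitian curve $X^{q+1}=Y^q+Y$ over $\mathbb{F}_{q^2}$ (rate $L/N$ with $N=L+X+T+3q^2-q-2$). *)

theory Defs
  imports "HOL-Computational_Algebra.Computational_Algebra" "HOL-Library.Cardinality"
begin

text \<open>An elliptic curve over the finite field 'k (characteristic > 3) in short form
  y^2 = f(x), with f a cubic without repeated roots (f coprime to its derivative).\<close>
definition is_elliptic_cubic :: "'k::{field,finite} poly \<Rightarrow> bool" where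
  "is_elliptic_cubic f \<longleftrightarrow> degree f = 3 \<and> coprime f (pderiv f)"

text \<open>Number of rational points: affine solutions plus the point at infinity.\<close>
definition ell_num_points :: "'k::{field,finite} poly \<Rightarrow> nat" where
  "ell_num_points f = card {(x, y). y ^ 2 = poly f x} + 1"

definition num_roots :: "'k::{field,finite} poly \<Rightarrow> nat" where
  "num_roots f = card {z. poly f z = 0}"

definition L_E :: "nat \<Rightarrow> nat \<Rightarrow> nat \<Rightarrow> nat \<Rightarrow> int" where
  "L_E N X T \<gamma> = 2 * \<lfloor>(real N - real (X + T + \<gamma> + 9)) / 4\<rfloor> - 1"

definition R_E_max :: "nat \<Rightarrow> nat \<Rightarrow> nat \<Rightarrow> nat \<Rightarrow> real" where
  "R_E_max N X T \<gamma> = real_of_int (L_E N X T \<gamma>) / (real_of_int (L_E N X T \<gamma>) + real X + real T + 8)"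

definition m_H :: "nat \<Rightarrow> nat \<Rightarrow> nat \<Rightarrow> int" where
  "m_H q X T = \<lfloor>(real q ^ 3 - 3 * real q ^ 2 + real q + 1 - real (X + T)) / (2 * real q)\<rfloor>"

definition L_H :: "nat \<Rightarrow> nat \<Rightarrow> nat \<Rightarrow> real" where
  "L_H q X T = real_of_int (m_H q X T) * real q - real q * (real q - 1) / 2"

definition R_H_max :: "nat \<Rightarrow> nat \<Rightarrow> nat \<Rightarrow> real" where
  "R_H_max q X T = L_H q X T / (L_H q X T + real X + real T + 3 * real q ^ 2 - real q - 2)"

end

theory Submission
  imports Defs
begin

text \<open>Both rates have the form \<open>L / (L + c)\<close>, so after cross-multiplying the claim becomes
  \<open>L\<^sup>E c\<^sup>H < L\<^sup>H c\<^sup>E\<close>. With \<open>s = X + T\<close>, removing the floors gives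
  \<open>L\<^sup>E \<le> (q\<^sup>2 + 2q - 10 - s)/2\<close> and \<open>L\<^sup>H > (q\<^sup>3 - 4q\<^sup>2 + 1 - s)/2\<close>, and the resulting
  polynomial inequality in \<open>q\<close> and \<open>s\<close> holds for \<open>q \<ge> 7\<close>, \<open>s \<ge> 3q + 6\<close>, except at
  \<open>q = 7, s = 27\<close>, where the floor in \<open>L\<^sup>H\<close> has to be evaluated exactly.
  Of the curve only its point count \<open>(q + 1)\<^sup>2\<close> and the bound \<open>\<gamma> \<le> q\<^sup>2\<close> enter; the latter
  keeps the denominator of \<open>R\<^sup>E\<close> positive.\<close>

lemma divide_add_less_divide_add:
  fixes a b c d :: "'a::linordered_field"
  assumes "0 < b + c" and "0 < a + d" and "b * d < a * c"
  shows "b / (b + c) < a / (a + d)"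
proof -
  have "b * (a + d) < a * (b + c)"
    using assms(3) by (simp add: algebra_simps)
  then show ?thesis
    using assms(1,2) by (simp add: divide_simps)
qed

lemma L_E_le: "real_of_int (L_E N X T \<gamma>) \<le> (real N - real (X + T + \<gamma> + 9)) / 2 - 1"
  using of_int_floor_le[of "(real N - real (X + T + \<gamma> + 9)) / 4"]
  unfolding L_E_def by simp

lemma L_E_gt: "real_of_int (L_E N X T \<gamma>) > (real N - real (X + T + \<gamma> + 9)) / 2 - 3"
  using real_of_int_floor_gt_diff_one[of "(real N - real (X + T + \<gamma> + 9)) / 4"]
  unfolding L_E_def by linarith

lemma L_H_gt:
  assumes "q > 0"
  shows "L_H q X T > (real q ^ 3 - 4 * real q ^ 2 + 1 - real (X + T)) / 2"
proof -
  define t where "t = (real q ^ 3 - 3 * real q ^ 2 + real q + 1 - real (X + T)) / (2 * real q)"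
  have "(real q ^ 3 - 4 * real q ^ 2 + 1 - real (X + T)) / 2
      = (t - 1) * real q - real q * (real q - 1) / 2"
    using assms unfolding t_def by (simp add: field_simps power2_eq_square power3_eq_cube)
  also have "\<dots> < L_H q X T"
    using real_of_int_floor_gt_diff_one[of t] assms
    unfolding L_H_def m_H_def t_def by (intro diff_strict_right_mono mult_strict_right_mono) auto
  finally show ?thesis .
qed

lemma L_H_7_27:
  assumes "X + T = 27"
  shows "L_H 7 X T = 63"
proof -
  have "m_H 7 X T = 12"
    unfolding m_H_def using assms by simp
  then show ?thesis
    unfolding L_H_def by simp
qed

lemma rate_bounds_cross_less:
  fixes q s :: real
  assumes "3 * q + 6 \<le> s" and "8 \<le> q \<or> q = 7 \<and> 28 \<le> s"
  shows "(q\<^sup>2 + 2 * q - 10 - s) * (s + 3 * q\<^sup>2 - q - 2) < (q ^ 3 - 4 * q\<^sup>2 + 1 - s) * (s + 8)"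
proof -
  define P where "P = q ^ 3 - 2 * q\<^sup>2 - 3 * q + 1"
  \<comment> \<open>The constant term is \<open>-55\<close> at \<open>q = 7\<close>, hence the stronger hypothesis there.\<close>
  have diff: "(q ^ 3 - 4 * q\<^sup>2 + 1 - s) * (s + 8) - (q\<^sup>2 + 2 * q - 10 - s) * (s + 3 * q\<^sup>2 - q - 2)
      = (s - 3 * q - 6) * P + (3 * q ^ 3 - 19 * q\<^sup>2 - 21 * q - 6)"
    unfolding P_def by (simp add: algebra_simps power2_eq_square power3_eq_cube)
  from assms(2) show ?thesis
  proof
    assume q: "8 \<le> q"
    have "8 * q \<le> q\<^sup>2"
      using q by (simp add: power2_eq_square)
    moreover have "8 * q\<^sup>2 \<le> q ^ 3"
      using q by (simp add: power2_eq_square power3_eq_cube)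
    ultimately have "0 \<le> P" and "0 < 3 * q ^ 3 - 19 * q\<^sup>2 - 21 * q - 6"
      using q unfolding P_def by linarith+
    moreover have "0 \<le> (s - 3 * q - 6) * P"
      using assms(1) \<open>0 \<le> P\<close> by simp
    ultimately show ?thesis
      using diff by linarith
  next
    assume "q = 7 \<and> 28 \<le> s"
    then show ?thesis
      by (simp add: power2_eq_square power3_eq_cube algebra_simps)
  qed
qed

lemma R_E_max_less_R_H_max:
  fixes q X T \<gamma> :: nat
  assumes "7 \<le> q" and "3 * (q + 2) \<le> X + T" and "\<gamma> \<le> q\<^sup>2"
  shows "R_E_max ((q + 1)\<^sup>2) X T \<gamma> < R_H_max q X T"
proof -
  define Q where "Q = real q"
  define s where "s = real (X + T)"
  define a where "a = L_H q X T"
  define b where "b = real_of_int (L_E ((q + 1)\<^sup>2) X T \<gamma>)"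
  have Q: "7 \<le> Q" and s: "3 * Q + 6 \<le> s" and \<gamma>: "real \<gamma> \<le> Q\<^sup>2"
    using assms unfolding Q_def s_def by (simp_all flip: of_nat_le_iff)
  have N: "real ((q + 1)\<^sup>2) = Q\<^sup>2 + 2 * Q + 1"
    unfolding Q_def by (simp add: power2_eq_square algebra_simps)
  have b_le: "b \<le> (Q\<^sup>2 + 2 * Q - 10 - s) / 2"
    using L_E_le[of "(q + 1)\<^sup>2" X T \<gamma>]
    unfolding b_def N s_def by (simp add: field_simps)
  have b_denom: "0 < b + (s + 8)"
    using L_E_gt[of "(q + 1)\<^sup>2" X T \<gamma>] \<gamma> Q s unfolding b_def N s_def by (simp add: field_simps)
  have a_gt: "(Q ^ 3 - 4 * Q\<^sup>2 + 1 - s) / 2 < a"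
    using L_H_gt[of q X T] assms(1) unfolding a_def Q_def s_def by simp
  have "7 * Q \<le> Q\<^sup>2" and "7 * Q\<^sup>2 \<le> Q ^ 3"
    using Q by (simp_all add: power2_eq_square power3_eq_cube)
  then have d_H: "0 < s + 3 * Q\<^sup>2 - Q - 2" and a_denom: "0 < a + (s + 3 * Q\<^sup>2 - Q - 2)"
    using a_gt Q s by (simp_all add: field_simps)
  have "b * (s + 3 * Q\<^sup>2 - Q - 2) < a * (s + 8)"
  proof (cases "q = 7 \<and> X + T = 27")
    case True
    then have "a = 63" and "Q = 7" and "s = 27"
      using L_H_7_27 unfolding a_def Q_def s_def by simp_all
    then show ?thesis
      using b_le d_H by (simp add: power2_eq_square)
  next
    case False
    then have "8 \<le> Q \<or> Q = 7 \<and> 28 \<le> s"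
      using assms(1,2) unfolding Q_def s_def by (auto simp flip: of_nat_le_iff)
    from rate_bounds_cross_less[OF s this] have
      "(Q\<^sup>2 + 2 * Q - 10 - s) / 2 * (s + 3 * Q\<^sup>2 - Q - 2) < (Q ^ 3 - 4 * Q\<^sup>2 + 1 - s) / 2 * (s + 8)"
      by simp
    moreover have "b * (s + 3 * Q\<^sup>2 - Q - 2) \<le> (Q\<^sup>2 + 2 * Q - 10 - s) / 2 * (s + 3 * Q\<^sup>2 - Q - 2)"
      using b_le d_H by (intro mult_right_mono) auto
    moreover have "(Q ^ 3 - 4 * Q\<^sup>2 + 1 - s) / 2 * (s + 8) < a * (s + 8)"
      using a_gt s Q by (intro mult_strict_right_mono) auto
    ultimately show ?thesis
      by linarith
  qed
  from divide_add_less_divide_add[OF b_denom a_denom this] show ?thesis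
    unfolding R_E_max_def R_H_max_def a_def b_def s_def Q_def by (simp add: algebra_simps)
qed

theorem proposition4p8:
  fixes f :: "'k::{field,finite} poly"
    and p h q X T :: nat
  assumes "prime p" and "p > 3" and "q = p ^ h" and "q \<ge> 7"
    and "CARD('k) = q ^ 2" and "CHAR('k) = p"
    and "X > 0" and "T > 0" and "X + T \<ge> 3 * (q + 2)"
    and "is_elliptic_cubic f"
    and "ell_num_points f = q ^ 2 + 1 + 2 * q"
  shows "R_H_max q X T > R_E_max (ell_num_points f) X T (num_roots f)"
proof -
  have "num_roots f \<le> q\<^sup>2"
    using card_mono[of UNIV "{z. poly f z = 0}"] assms(5) unfolding num_roots_def by simp
  moreover have "ell_num_points f = (q + 1)\<^sup>2"
    using assms(11) by (simp add: power2_eq_square algebra_simps)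
  ultimately show ?thesis
    using R_E_max_less_R_H_max assms(4,9) by simp
qed

end
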